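(* Let $m$ be a non-empty finite word over $D=\{E,N,S,W\}$. If the word $mm$ is a free path, then the bi-infinite word ${}^{\omega}m^{\omega}=\cdots mmm\cdots$ is a free path.
   Context: $D=\{E,N,S,W\}$ with $E=(1,0)$, $N=(0,1)$, $S=(0,-1)$, $W=(-1,0)$; $\mathbb Z^2$ is viewed as the grid graph in which two points are adjacent iff they are at Euclidean distance $1$. A free path is a (finite, forward infinite, backward infinite or bi-infinite) word over $D$ such that the walk in $\mathbb Z^2$ obtained by starting at some point and successively adding the letters of the word as unit vectors never visits a vertex twice (i.e. it is a simple path; this does not depend on the starting point). *)

theory Defs
  imports Main "HOL-Library.Product_Plus"
begin

datatype dir = E | N | S | W

fun vec :: "dir \<Rightarrow> int \<times> int" where
  "vec E = (1, 0)" | "vec N = (0, 1)" | "vec S = (0, -1)" | "vec W = (-1, 0)"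

definition walk :: "dir list \<Rightarrow> nat \<Rightarrow> int \<times> int" where
  "walk m k = sum_list (map vec (take k m))"

definition free_finite :: "dir list \<Rightarrow> bool" where
  "free_finite m \<longleftrightarrow> inj_on (walk m) {0..length m}"

(* bi-infinite word w : int => dir; position of the walk at time k, with position 0 at time 0
   and pos w (k+1) = pos w k + vec (w k) *)
definition biwalk :: "(int \<Rightarrow> dir) \<Rightarrow> int \<Rightarrow> int \<times> int" where
  "biwalk w k = (if 0 \<le> k then (\<Sum>i\<in>{0..<k}. vec (w i)) else - (\<Sum>i\<in>{k..<0}. vec (w i)))"

definition free_biinf :: "(int \<Rightarrow> dir) \<Rightarrow> bool" where
  "free_biinf w \<longleftrightarrow> inj (biwalk w)"

definition biperiodic :: "dir list \<Rightarrow> int \<Rightarrow> dir" where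
  "biperiodic m i = m ! nat (i mod int (length m))"

end

theory Submission
  imports Defs "HOL-Complex_Analysis.Winding_Numbers"
begin

text \<open>
  Identify the plane with \<open>\<complex>\<close> and let \<open>V\<close> be the displacement of \<open>m\<close>. The bi-infinite walk is
  the union of the translates of the walk of \<open>m\<close> by \<open>\<int>V\<close>, so a self-intersection yields two
  vertices of \<open>m\<close> whose difference is \<open>KV\<close>. Freeness of \<open>mm\<close> rules out \<open>|K| \<le> 1\<close>. For
  \<open>|K| \<ge> 2\<close>, take a shortest such chord: its polygon is injective modulo \<open>\<int>V\<close> except at the
  endpoints, so \<open>z \<mapsto> exp (2\<pi>iz/V)\<close> maps it to a simple closed curve in \<open>\<complex> - {0}\<close> winding
  \<open>K\<close> times around \<open>0\<close>, which is impossible by the Jordan curve theorem.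
\<close>

definition gaussian_int :: "complex \<Rightarrow> bool" where
  "gaussian_int z \<longleftrightarrow> Re z \<in> \<int> \<and> Im z \<in> \<int>"

lemma gaussian_int_add: "gaussian_int a \<Longrightarrow> gaussian_int b \<Longrightarrow> gaussian_int (a + b)"
  and gaussian_int_diff: "gaussian_int a \<Longrightarrow> gaussian_int b \<Longrightarrow> gaussian_int (a - b)"
  and gaussian_int_mult: "gaussian_int a \<Longrightarrow> gaussian_int b \<Longrightarrow> gaussian_int (a * b)"
  and gaussian_int_of_int_mult: "gaussian_int a \<Longrightarrow> gaussian_int (of_int k * a)"
  by (simp_all add: gaussian_int_def)

lemma gaussian_int_unit: "D \<in> {1, -1, \<i>, -\<i>} \<Longrightarrow> gaussian_int D"
  by (auto simp: gaussian_int_def)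

lemma not_gaussian_int_scaled_unit:
  assumes "D \<in> {1, -1, \<i>, -\<i>}" "0 < l" "l < 1"
  shows "\<not> gaussian_int (of_real l * D)"
  using assms Ints_nonzero_abs_less1[of l] Ints_nonzero_abs_less1[of "-l"]
  by (auto simp: gaussian_int_def)

lemma gaussian_int_scaled_unit_diff:
  assumes D1: "D1 \<in> {1, -1, \<i>, -\<i>}" and D2: "D2 \<in> {1, -1, \<i>, -\<i>}"
    and l: "0 < l1" "l1 < 1" "0 < l2" "l2 < 1"
    and g: "gaussian_int (of_real l1 * D1 - of_real l2 * D2)"
  shows "(D2 = D1 \<and> l2 = l1) \<or> (D2 = - D1 \<and> l2 = 1 - l1)"
proof -
  \<comment> \<open>rotating by \<open>cnj D1\<close> reduces to the case \<open>D1 = 1\<close>\<close>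
  define D where "D = D2 * cnj D1"
  have D1_unit: "cnj D1 * D1 = 1" and D2_eq: "D2 = D * D1"
    using D1 by (auto simp: D_def)
  have "D \<in> {1, -1, \<i>, -\<i>}" using D1 D2 by (auto simp: D_def)
  moreover have "gaussian_int (of_real l1 - of_real l2 * D)"
    using gaussian_int_mult[OF g gaussian_int_unit[of "cnj D1"]] D1 D1_unit
    by (auto simp: D_def algebra_simps)
  moreover have "l1 \<notin> \<int>" using l Ints_nonzero_abs_less1[of l1] by auto
  moreover have "l1 - l2 \<in> \<int> \<Longrightarrow> l2 = l1" using l Ints_nonzero_abs_less1[of "l1 - l2"] by force
  moreover have "l1 + l2 \<in> \<int> \<Longrightarrow> l2 = 1 - l1"
    using l Ints_nonzero_abs_less1[of "l1 + l2 - 1"] Ints_diff[OF _ Ints_1] by force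
  ultimately have "D = 1 \<and> l2 = l1 \<or> D = -1 \<and> l2 = 1 - l1"
    by (auto simp: gaussian_int_def)
  then show ?thesis using D2_eq by auto
qed

definition grid_path :: "nat \<Rightarrow> (nat \<Rightarrow> complex) \<Rightarrow> bool" where
  "grid_path L q \<longleftrightarrow>
     (\<forall>s\<le>L. gaussian_int (q s)) \<and> (\<forall>s<L. q (Suc s) - q s \<in> {1, -1, \<i>, -\<i>})"

definition simple_modulo :: "nat \<Rightarrow> (nat \<Rightarrow> complex) \<Rightarrow> complex \<Rightarrow> bool" where
  "simple_modulo L q V \<longleftrightarrow>
     (\<forall>s\<le>L. \<forall>t\<le>L. \<forall>k::int. q s - q t = of_int k * V \<longrightarrow> s = t \<or> {s, t} = {0, L})"

\<comment> \<open>edge \<open>s\<close> of the polygon through \<open>q 0, \<dots>, q L\<close> is traversed for \<open>u \<in> [s, s + 1]\<close>\<close>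
definition polygon :: "nat \<Rightarrow> (nat \<Rightarrow> complex) \<Rightarrow> real \<Rightarrow> complex" where
  "polygon L q u = q 0 + (\<Sum>s<L. of_real (min 1 (max 0 (u - real s))) * (q (Suc s) - q s))"

lemma continuous_on_polygon [continuous_intros]:
  "continuous_on A f \<Longrightarrow> continuous_on A (\<lambda>x. polygon L q (f x))"
  unfolding polygon_def by (intro continuous_intros)

lemma polygon_edge:
  assumes "a < L" "0 \<le> l" "l \<le> 1"
  shows "polygon L q (real a + l) = q a + of_real l * (q (Suc a) - q a)"
proof -
  let ?f = "\<lambda>s. of_real (min 1 (max 0 (real a + l - real s))) * (q (Suc s) - q s)"
  have split: "{..<L} = {..<a} \<union> ({a} \<union> {Suc a..<L})" using assms by auto
  have "sum ?f {..<L} = sum ?f {..<a} + (?f a + sum ?f {Suc a..<L})"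
    unfolding split by (subst sum.union_disjoint; auto)
  also have "sum ?f {..<a} = (\<Sum>s<a. q (Suc s) - q s)"
    by (rule sum.cong) (use assms in auto)
  also have "\<dots> = q a - q 0" by (rule sum_lessThan_telescope)
  also have "sum ?f {Suc a..<L} = 0"
    by (rule sum.neutral) (use assms in auto)
  finally show ?thesis using assms by (simp add: polygon_def)
qed

lemma polygon_start: "polygon L q 0 = q 0"
  by (simp add: polygon_def)

lemma polygon_finish: "0 < L \<Longrightarrow> polygon L q (real L) = q L"
  using polygon_edge[of "L - 1" L 1 q] by (simp add: of_nat_diff)

lemma obtain_edge_parameter:
  assumes "0 < L" "0 \<le> u" "u \<le> real L"
  obtains a l where "a < L" "0 \<le> l" "l \<le> 1" "u = real a + l"
proof (cases "u < real L")
  case True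
  then show ?thesis
    using assms that[of "nat \<lfloor>u\<rfloor>" "u - real (nat \<lfloor>u\<rfloor>)"] by linarith
next
  case False
  then show ?thesis using assms that[of "L - 1" 1] by (simp add: of_nat_diff)
qed

lemma edge_endpoint_vertex:
  assumes "a < L" "l = 0 \<or> l = 1"
  obtains b where "b \<le> L" "q a + of_real l * (q (Suc a) - q a) = q b" "real b = real a + l"
  using assms that[of a] that[of "Suc a"] by auto

lemma simple_modulo_no_antiparallel_edges:
  assumes sm: "simple_modulo L q V" and ends: "q L \<noteq> q 0"
    and a: "a1 < L" "a2 < L" and nz: "q (Suc a1) \<noteq> q a1"
    and anti: "q (Suc a2) - q a2 = - (q (Suc a1) - q a1)"
    and e1: "q (Suc a1) - q a2 = of_int k * V"
  shows False
proof -
  have e2: "q a1 - q (Suc a2) = of_int k * V"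
    using e1 anti by (simp add: algebra_simps)
  have "(Suc a1 = a2 \<or> Suc a1 = L \<and> a2 = 0) \<and> (a1 = Suc a2 \<or> a1 = 0 \<and> Suc a2 = L)"
    using sm a e1 e2 unfolding simple_modulo_def
    by (metis Suc_leI less_imp_le_nat doubleton_eq_iff nat.distinct(1))
  then consider "Suc a1 = a2" "a1 = 0" "Suc a2 = L" | "Suc a1 = L" "a2 = 0" "a1 = Suc a2"
    | "Suc a1 = L" "a2 = 0" "a1 = 0"
    by linarith
  then show False
  proof cases
    case 1 then show False using e1 e2 ends by auto
  next
    case 2 then show False using e1 e2 ends by auto
  next
    case 3 then show False using anti nz by (simp add: algebra_simps)
  qed
qed

lemma polygon_edge_points_modulo:
  assumes path: "grid_path L q" and V: "gaussian_int V"
    and sm: "simple_modulo L q V" and ends: "q L \<noteq> q 0"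
    and a: "a1 < L" "a2 < L" and l: "0 \<le> l1" "l1 \<le> 1" "0 \<le> l2" "l2 \<le> 1"
    and eq: "(q a1 + of_real l1 * (q (Suc a1) - q a1)) - (q a2 + of_real l2 * (q (Suc a2) - q a2))
             = of_int k * V"
  shows "real a1 + l1 = real a2 + l2 \<or> {real a1 + l1, real a2 + l2} = {0, real L}"
proof -
  define D1 where "D1 = q (Suc a1) - q a1"
  define D2 where "D2 = q (Suc a2) - q a2"
  have D: "D1 \<in> {1, -1, \<i>, -\<i>}" "D2 \<in> {1, -1, \<i>, -\<i>}"
    using path a unfolding grid_path_def D1_def D2_def by auto
  have g: "gaussian_int (q a1)" "gaussian_int (q a2)" "gaussian_int (of_int k * V)"
    using path a V unfolding grid_path_def by (auto intro: gaussian_int_of_int_mult)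
  note eq = eq[folded D1_def D2_def]
  have vertex_modulo: "\<lbrakk>b1 \<le> L; b2 \<le> L; q b1 - q b2 = of_int k * V\<rbrakk>
      \<Longrightarrow> real b1 = real b2 \<or> {real b1, real b2} = {0, real L}" for b1 b2
    using sm unfolding simple_modulo_def by (metis of_nat_0 doubleton_eq_iff)
  consider "l1 = 0 \<or> l1 = 1" "l2 = 0 \<or> l2 = 1" | "0 < l1" "l1 < 1" "l2 = 0 \<or> l2 = 1"
    | "l1 = 0 \<or> l1 = 1" "0 < l2" "l2 < 1" | "0 < l1" "l1 < 1" "0 < l2" "l2 < 1"
    using l by linarith
  then show ?thesis
  proof cases
    case 1
    obtain b1 where b1: "b1 \<le> L" "q a1 + of_real l1 * D1 = q b1" "real b1 = real a1 + l1"
      using edge_endpoint_vertex[OF a(1) 1(1)] unfolding D1_def by blast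
    obtain b2 where b2: "b2 \<le> L" "q a2 + of_real l2 * D2 = q b2" "real b2 = real a2 + l2"
      using edge_endpoint_vertex[OF a(2) 1(2)] unfolding D2_def by blast
    show ?thesis using vertex_modulo[OF b1(1) b2(1)] eq b1 b2 by simp
  next
    case 2
    obtain b2 where b2: "b2 \<le> L" "q a2 + of_real l2 * D2 = q b2"
      using edge_endpoint_vertex[OF a(2) 2(3)] unfolding D2_def by blast
    have "q a1 + of_real l1 * D1 - q b2 = of_int k * V" using eq b2(2) by simp
    then have "of_real l1 * D1 = of_int k * V - q a1 + q b2" by (simp add: algebra_simps)
    moreover have "gaussian_int (of_int k * V - q a1 + q b2)"
      using g path b2(1) unfolding grid_path_def by (intro gaussian_int_add gaussian_int_diff) auto
    ultimately show ?thesis using not_gaussian_int_scaled_unit[OF D(1) 2(1,2)] by simp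
  next
    case 3
    obtain b1 where b1: "b1 \<le> L" "q a1 + of_real l1 * D1 = q b1"
      using edge_endpoint_vertex[OF a(1) 3(1)] unfolding D1_def by blast
    have "q b1 - (q a2 + of_real l2 * D2) = of_int k * V" using eq b1(2) by simp
    then have "of_real l2 * D2 = q b1 - q a2 - of_int k * V" by (simp add: algebra_simps)
    moreover have "gaussian_int (q b1 - q a2 - of_int k * V)"
      using g path b1(1) unfolding grid_path_def by (intro gaussian_int_diff) auto
    ultimately show ?thesis using not_gaussian_int_scaled_unit[OF D(2) 3(2,3)] by simp
  next
    case 4
    have "of_real l1 * D1 - of_real l2 * D2 = of_int k * V - q a1 + q a2"
      using eq by (simp add: algebra_simps)
    moreover have "gaussian_int (of_int k * V - q a1 + q a2)"
      using g by (intro gaussian_int_add gaussian_int_diff)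
    ultimately have "gaussian_int (of_real l1 * D1 - of_real l2 * D2)" by simp
    from gaussian_int_scaled_unit_diff[OF D 4 this] show ?thesis
    proof
      assume parallel: "D2 = D1 \<and> l2 = l1"
      then have "q a1 - q a2 = of_int k * V"
        using eq by (simp add: algebra_simps)
      then have "a1 = a2" using vertex_modulo[of a1 a2] a by (auto simp: doubleton_eq_iff)
      then show ?thesis using parallel by simp
    next
      assume "D2 = - D1 \<and> l2 = 1 - l1"
      moreover have "q (Suc a1) \<noteq> q a1" using D(1) unfolding D1_def by auto
      moreover have "q (Suc a1) - q a2 = of_int k * V"
        using eq calculation(1) unfolding D1_def by (simp add: algebra_simps)
      ultimately show ?thesis
        using simple_modulo_no_antiparallel_edges[OF sm ends a] unfolding D1_def D2_def by blast
    qed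
  qed
qed

lemma polygon_inj_modulo:
  assumes path: "grid_path L q" and V: "gaussian_int V"
    and sm: "simple_modulo L q V" and ends: "q L \<noteq> q 0"
    and x: "0 \<le> x" "x \<le> real L" and y: "0 \<le> y" "y \<le> real L"
    and eq: "polygon L q x - polygon L q y = of_int k * V"
  shows "x = y \<or> {x, y} = {0, real L}"
proof -
  have "0 < L" using ends by (auto intro: Nat.gr0I)
  then obtain a1 l1 a2 l2 where
    "a1 < L" "0 \<le> l1" "l1 \<le> 1" "x = real a1 + l1" "a2 < L" "0 \<le> l2" "l2 \<le> 1" "y = real a2 + l2"
    using obtain_edge_parameter x y by metis
  then show ?thesis
    using polygon_edge_points_modulo[OF path V sm ends] eq by (simp add: polygon_edge)
qed

lemma simple_modulo_winding:
  assumes path: "grid_path L q" and V: "gaussian_int V" "V \<noteq> 0"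
    and sm: "simple_modulo L q V"
    and ends: "q L - q 0 = of_int K * V" and K: "K \<noteq> 0"
  shows "\<bar>K\<bar> = 1"
proof -
  have ends_ne: "q L \<noteq> q 0" using ends K V by auto
  then have L: "0 < L" by (auto intro: Nat.gr0I)
  define c where "c = 2 * of_real pi * \<i> / V"
  define p where "p t = c * polygon L q (real L * t)" for t
  define \<gamma> where "\<gamma> = exp \<circ> p"
  have "path p" unfolding path_def p_def by (intro continuous_intros)
  then have "path \<gamma>" unfolding \<gamma>_def path_def by (intro continuous_intros) auto
  have p_ends: "pathfinish p - pathstart p = 2 * of_real pi * \<i> * of_int K"
    using ends V L unfolding pathfinish_def pathstart_def p_def c_def
    by (simp add: polygon_start polygon_finish field_simps right_diff_distrib[symmetric])
  have "winding_number \<gamma> 0 = of_int K"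
    unfolding \<gamma>_def using winding_number_compose_exp[OF \<open>path p\<close>] p_ends by simp
  have closed: "pathfinish \<gamma> = pathstart \<gamma>"
  proof -
    have "pathfinish \<gamma> = exp (pathstart p + \<i> * (of_int K * (of_real pi * 2)))"
      using p_ends unfolding \<gamma>_def pathfinish_def pathstart_def by (simp add: algebra_simps)
    then show ?thesis unfolding \<gamma>_def pathstart_def by simp
  qed
  have "loop_free \<gamma>"
    unfolding loop_free_def
  proof (intro ballI impI)
    fix x y :: real assume x: "x \<in> {0..1}" and y: "y \<in> {0..1}" and "\<gamma> x = \<gamma> y"
    then obtain n :: int where "p x = p y + of_int (2 * n) * of_real pi * \<i>"
      unfolding \<gamma>_def by (auto simp: exp_eq)
    then have "2 * of_real pi * \<i> * (polygon L q (real L * x) - polygon L q (real L * y))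
        = 2 * of_real pi * \<i> * (of_int n * V)"
      using V unfolding p_def c_def by (simp add: field_simps)
    then have "polygon L q (real L * x) - polygon L q (real L * y) = of_int n * V"
      by simp
    moreover have "0 \<le> real L * x" "real L * x \<le> real L" "0 \<le> real L * y" "real L * y \<le> real L"
      using x y by (auto simp: mult_left_le)
    ultimately have "real L * x = real L * y \<or> {real L * x, real L * y} = {0, real L}"
      using polygon_inj_modulo[OF path V(1) sm ends_ne] by blast
    then show "x = y \<or> x = 0 \<and> y = 1 \<or> x = 1 \<and> y = 0"
      using L by (auto simp: doubleton_eq_iff)
  qed
  moreover have "0 \<notin> path_image \<gamma>" unfolding \<gamma>_def path_image_def by auto
  ultimately have "winding_number \<gamma> 0 \<in> {-1, 0, 1}"
    using simple_closed_path_winding_number_cases closed \<open>path \<gamma>\<close> by (auto simp: simple_path_def)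
  then have "K \<in> {-1, 0, 1}"
    using \<open>winding_number \<gamma> 0 = of_int K\<close>
    by (metis insert_iff of_int_eq_iff of_int_minus of_int_0 of_int_1 singletonD)
  then show ?thesis using K by auto
qed

lemma grid_path_no_long_chord:
  assumes path: "grid_path n q" and n: "0 < n" and inj: "inj_on q {..n}"
    and shift: "\<And>s t. s \<le> n \<Longrightarrow> t \<le> n \<Longrightarrow> q s = q t + (q n - q 0) \<Longrightarrow> s = n \<and> t = 0"
    and st: "s \<le> n" "t \<le> n" and chord: "q t - q s = of_int K * (q n - q 0)"
  shows "\<bar>K\<bar> \<le> 1"
proof (rule ccontr)
  define V where "V = q n - q 0"
  have "V \<noteq> 0" using inj n unfolding V_def by (auto dest: inj_onD)
  have "gaussian_int V" using path unfolding V_def grid_path_def by (auto intro: gaussian_int_diff)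
  define long_chord where "long_chord = (\<lambda>(i, j). i < j \<and> j \<le> n \<and>
    (\<exists>k::int. 2 \<le> \<bar>k\<bar> \<and> q j - q i = of_int k * V))"
  have long_chord_intro: "long_chord (min a b, max a b)"
    if "a \<le> n" "b \<le> n" "2 \<le> \<bar>k\<bar>" "q b - q a = of_int k * V" for a b k
  proof -
    have "a \<noteq> b" using that \<open>V \<noteq> 0\<close> by auto
    moreover have "q a - q b = of_int (- k) * V" using that(4) by (simp add: algebra_simps)
    ultimately show ?thesis using that unfolding long_chord_def
      by (cases "a < b") (auto intro: exI[of _ k] exI[of _ "- k"])
  qed
  assume "\<not> \<bar>K\<bar> \<le> 1"
  then have "long_chord (min s t, max s t)"
    using long_chord_intro[OF st, of K] chord unfolding V_def by simp
  then obtain i j where ij: "long_chord (i, j)"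
    and shortest: "\<And>a b. long_chord (a, b) \<Longrightarrow> j - i \<le> b - a"
    using ex_has_least_nat[of long_chord _ "\<lambda>(a, b). b - a"] by fastforce
  then obtain k where ij': "i < j" "j \<le> n" "2 \<le> \<bar>k\<bar>" "q j - q i = of_int k * V"
    unfolding long_chord_def by auto
  define L where "L = j - i"
  define q' where "q' x = q (i + x)" for x
  have "grid_path L q'" using path ij' unfolding grid_path_def L_def q'_def by auto
  \<comment> \<open>by minimality, every chord strictly inside \<open>[i, j]\<close> has \<open>|k| \<le> 1\<close>\<close>
  moreover have "simple_modulo L q' V"
    unfolding simple_modulo_def
  proof (intro allI impI)
    fix a b and k' :: int
    assume ab: "a \<le> L" "b \<le> L" and e: "q' a - q' b = of_int k' * V"
    have ab': "i + a \<le> n" "i + b \<le> n" using ab ij' unfolding L_def by auto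
    consider "k' = 0" | "k' = 1" | "k' = -1" | "2 \<le> \<bar>k'\<bar>" by linarith
    then show "a = b \<or> {a, b} = {0, L}"
    proof cases
      case 1 then show ?thesis using e inj ab' unfolding q'_def by (auto dest: inj_onD)
    next
      case 2
      then have "q (i + a) = q (i + b) + (q n - q 0)"
        using e unfolding q'_def V_def by (simp add: algebra_simps)
      then show ?thesis using shift[OF ab'] ab ij' unfolding L_def by auto
    next
      case 3
      then have "q (i + b) = q (i + a) + (q n - q 0)"
        using e unfolding q'_def V_def by (simp add: algebra_simps)
      then show ?thesis using shift[OF ab'(2,1)] ab ij' unfolding L_def by auto
    next
      case 4
      have "q (i + a) - q (i + b) = of_int k' * V" using e unfolding q'_def .
      from long_chord_intro[OF ab'(2,1) 4 this] have "L \<le> max a b - min a b"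
        using shortest[of "min (i + b) (i + a)" "max (i + b) (i + a)"] unfolding L_def by simp
      then show ?thesis using ab by (auto simp: max_def min_def doubleton_eq_iff split: if_splits)
    qed
  qed
  moreover have "q' L - q' 0 = of_int k * V" using ij' unfolding q'_def L_def by simp
  ultimately have "\<bar>k\<bar> = 1"
    using simple_modulo_winding \<open>gaussian_int V\<close> \<open>V \<noteq> 0\<close> ij'(3) by fastforce
  then show False using ij'(3) by simp
qed

lemma periodic_extension_inj:
  assumes path: "grid_path n q" and n: "0 < n" and inj: "inj_on q {..n}"
    and shift: "\<And>s t. s \<le> n \<Longrightarrow> t \<le> n \<Longrightarrow> q s = q t + (q n - q 0) \<Longrightarrow> s = n \<and> t = 0"
  shows "inj (\<lambda>t::int. of_int (t div int n) * (q n - q 0) + q (nat (t mod int n)))"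
proof (rule injI)
  fix t1 t2 :: int
  assume eq: "of_int (t1 div int n) * (q n - q 0) + q (nat (t1 mod int n))
    = of_int (t2 div int n) * (q n - q 0) + q (nat (t2 mod int n))"
  define r1 where "r1 = nat (t1 mod int n)"
  define r2 where "r2 = nat (t2 mod int n)"
  define k1 where "k1 = t1 div int n"
  define k2 where "k2 = t2 div int n"
  define K where "K = k2 - k1"
  have r: "r1 < n" "r2 < n" using n unfolding r1_def r2_def by (simp_all add: nat_less_iff)
  have chord: "q r1 - q r2 = of_int K * (q n - q 0)"
    using eq[folded k1_def k2_def r1_def r2_def] unfolding K_def by (simp add: algebra_simps)
  have "\<bar>K\<bar> \<le> 1"
    using grid_path_no_long_chord[OF path n inj shift less_imp_le[OF r(2)] less_imp_le[OF r(1)] chord] .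
  then consider "K = 0" | "K = 1" | "K = -1" by linarith
  then show "t1 = t2"
  proof cases
    case 1
    then have "q r1 = q r2" using chord by simp
    then have "r1 = r2" using inj r by (auto dest: inj_onD)
    with 1 have "t1 div int n = t2 div int n" "t1 mod int n = t2 mod int n"
      unfolding K_def k1_def k2_def r1_def r2_def using n by (simp_all add: eq_nat_nat_iff)
    then show ?thesis by (metis div_mult_mod_eq)
  next
    case 2
    then have "q r1 = q r2 + (q n - q 0)" using chord by (simp add: algebra_simps)
    then show ?thesis using shift[of r1 r2] r by simp
  next
    case 3
    then have "q r2 = q r1 + (q n - q 0)" using chord by (simp add: algebra_simps)
    then show ?thesis using shift[of r2 r1] r by simp
  qed
qed

definition complex_of_point :: "int \<times> int \<Rightarrow> complex" where
  "complex_of_point z = Complex (of_int (fst z)) (of_int (snd z))"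

lemma complex_of_point_add: "complex_of_point (a + b) = complex_of_point a + complex_of_point b"
  and complex_of_point_zero: "complex_of_point 0 = 0"
  by (simp_all add: complex_of_point_def complex_eq_iff)

lemma inj_complex_of_point: "inj complex_of_point"
  by (rule injI) (simp add: complex_of_point_def complex_eq_iff prod_eq_iff)

lemma gaussian_int_complex_of_point: "gaussian_int (complex_of_point a)"
  by (simp add: complex_of_point_def gaussian_int_def)

lemma complex_of_point_vec: "complex_of_point (Defs.vec d) \<in> {1, -1, \<i>, -\<i>}"
  by (cases d) (auto simp: complex_of_point_def complex_eq_iff)

lemma walk_Suc: "r < length m \<Longrightarrow> walk m (Suc r) = walk m r + Defs.vec (m ! r)"
  by (simp add: walk_def take_Suc_conv_app_nth)

lemma walk_append_left: "r \<le> length m \<Longrightarrow> walk (m @ m') r = walk m r"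
  by (simp add: walk_def)

lemma walk_append_right: "walk (m @ m') (length m + r) = walk m (length m) + walk m' r"
  by (simp add: walk_def)

lemma free_finite_append_left: "free_finite (m @ m') \<Longrightarrow> free_finite m"
proof -
  assume "free_finite (m @ m')"
  then have "inj_on (walk (m @ m')) {0..length m}"
    unfolding free_finite_def by (rule inj_on_subset) simp
  then show ?thesis
    unfolding free_finite_def by (rule inj_on_cong[THEN iffD1, rotated]) (simp add: walk_append_left)
qed

lemma free_finite_append_translate:
  assumes "free_finite (m @ m')" "s \<le> length m" "t \<le> length m'"
    and "walk m s = walk m (length m) + walk m' t"
  shows "s = length m \<and> t = 0"
proof -
  have "walk (m @ m') s = walk (m @ m') (length m + t)"
    using assms(2,4) by (simp add: walk_append_left walk_append_right)
  then have "s = length m + t"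
    using assms(1-3) unfolding free_finite_def by (auto dest: inj_onD)
  then show ?thesis using assms(2) by simp
qed

lemma biwalk_zero: "biwalk w 0 = 0"
  by (simp add: biwalk_def)

lemma biwalk_add1: "biwalk w (t + 1) = biwalk w t + Defs.vec (w t)"
proof -
  consider "0 \<le> t" | "t = -1" | "t + 1 < 0" by linarith
  then show ?thesis
  proof cases
    case 1
    then have "{0..<t + 1} = insert t {0..<t}" by auto
    then show ?thesis using 1 by (simp add: biwalk_def add.commute)
  next
    case 2
    moreover have "{-1..<0::int} = {-1}" by auto
    ultimately show ?thesis by (simp add: biwalk_def)
  next
    case 3
    then have "{t..<0} = insert t {t + 1..<0}" by auto
    then show ?thesis using 3 by (simp add: biwalk_def)
  qed
qed

lemma biwalk_biperiodic:
  assumes "m \<noteq> []"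
  shows "complex_of_point (biwalk (biperiodic m) t)
    = of_int (t div int (length m)) * complex_of_point (walk m (length m))
      + complex_of_point (walk m (nat (t mod int (length m))))"
proof -
  define n where "n = length m"
  define P where "P r = complex_of_point (walk m r)" for r
  define F where "F t = of_int (t div int n) * P n + P (nat (t mod int n))" for t
  have n: "0 < n" using assms unfolding n_def by simp
  have P0: "P 0 = 0" unfolding P_def walk_def by (simp add: complex_of_point_zero)
  have block: "F (k * int n + int r) = of_int k * P n + P r" if "r \<le> n" for k r
  proof (cases "r < n")
    case True
    then show ?thesis using n unfolding F_def by simp
  next
    case False
    then have "k * int n + int r = (k + 1) * int n" using that by (simp add: algebra_simps)
    then show ?thesis using n False that P0 unfolding F_def by (simp add: algebra_simps)
  qed
  have step: "F (t + 1) = F t + complex_of_point (Defs.vec (biperiodic m t))" for t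
  proof -
    define k where "k = t div int n"
    define r where "r = nat (t mod int n)"
    have r: "r < n" using n unfolding r_def by (simp add: nat_less_iff)
    have t: "t = k * int n + int r" using n unfolding k_def r_def by simp
    have "F (t + 1) = F (k * int n + int (Suc r))" using t by (simp add: ac_simps)
    also have "\<dots> = of_int k * P n + P (Suc r)" using r by (intro block) simp
    also have "\<dots> = F t + complex_of_point (Defs.vec (m ! r))"
      using r block[of r k] t walk_Suc[of r m]
      unfolding P_def n_def by (simp add: complex_of_point_add)
    also have "m ! r = biperiodic m t" unfolding biperiodic_def r_def n_def ..
    finally show ?thesis .
  qed
  have "F t = complex_of_point (biwalk (biperiodic m) t)"
  proof (induction t rule: int_induct[where k = 0])
    case base
    then show ?case using P0 by (simp add: F_def biwalk_zero complex_of_point_zero)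
  next
    case (step1 i)
    then show ?case using step[of i] by (simp add: biwalk_add1 complex_of_point_add)
  next
    case (step2 i)
    then show ?case using step[of "i - 1"] biwalk_add1[of "biperiodic m" "i - 1"]
      by (simp add: complex_of_point_add)
  qed
  then show ?thesis unfolding F_def P_def n_def ..
qed

theorem lemma1:
  fixes m :: "dir list"
  assumes "m \<noteq> []"
    and "free_finite (m @ m)"
  shows "free_biinf (biperiodic m)"
proof -
  define n where "n = length m"
  define P where "P r = complex_of_point (walk m r)" for r
  have n: "0 < n" using assms(1) unfolding n_def by simp
  have P0: "P 0 = 0" unfolding P_def walk_def by (simp add: complex_of_point_zero)
  have "grid_path n P"
    unfolding grid_path_def P_def n_def
    using complex_of_point_vec
    by (simp add: gaussian_int_complex_of_point walk_Suc complex_of_point_add)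
  moreover have "inj_on P {..n}"
    using free_finite_append_left[OF assms(2)]
    unfolding free_finite_def P_def n_def
    by (auto simp: atLeast0AtMost inj_on_def inj_eq[OF inj_complex_of_point])
  moreover have "s = n \<and> t = 0" if "s \<le> n" "t \<le> n" "P s = P t + (P n - P 0)" for s t
    using free_finite_append_translate[OF assms(2), of s t] that P0 inj_complex_of_point
    unfolding P_def n_def by (simp add: add.commute complex_of_point_add[symmetric] inj_eq)
  ultimately have "inj (\<lambda>t. of_int (t div int n) * (P n - P 0) + P (nat (t mod int n)))"
    by (rule periodic_extension_inj[OF _ n])
  then have "inj (complex_of_point \<circ> biwalk (biperiodic m))"
    using biwalk_biperiodic[OF assms(1)] P0 unfolding P_def n_def by (simp add: comp_def)
  then show ?thesis unfolding free_biinf_def by (rule inj_on_imageI2)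
qed

end
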